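(* Assume separability and full support, with the distributions $P_x$, $Q_y$ known. Let $\hat{\bm r}=(\hat{\bm n},\hat{\bm m})$ with all entries positive and let $\hat\mu\in\mathcal M(\hat{\bm r})$ be an observed matching with $\hat\mu_{xy}>0$, $\hat\mu_{x0}>0$, $\hat\mu_{0y}>0$ for all $x,y$; let $\Phi$ be the (unique) surplus matrix for which $\hat\mu$ is the stable matching with margins $\hat{\bm r}$. Let $\hat\lambda=\hat\lambda^{MM}$ be the moment-matching estimator, $\hat\lambda\in\arg\max_{\lambda\in\mathbb R^K}\left(\sum_{x,y}\hat\mu_{xy}\Phi^\lambda_{xy}-\mathcal W(\Phi^\lambda,\hat{\bm r})\right)$, and $\mu^{\lambda}$ the stable matching for surplus $\Phi^\lambda$ and margins $\hat{\bm r}$. Then: 1. $C^k(\hat\mu)=C^k(\mu^{\hat\lambda})$ for all $k=1,\dots,K$; 2. $\hat\lambda$ is the vector of Lagrange multipliers of the comoment equality constraints in the program $$\mathcal E_{\max}(\hat\mu,\hat{\bm r})=\max_{\mu\in\mathcal M(\hat{\bm r})}\left\{\mathcal E(\mu,\hat{\bm r}):C^k(\mu)=C^k(\hat\mu)\ \forall k\right\};$$ 3. $\mathcal E_{\max}(\hat\mu,\hat{\bm r})=\mathcal E(\mu^{\hat\lambda},\hat{\bm r})$, and $\mathcal E(\hat\mu,\hat{\bm r})\le\mathcal E_{\max}(\hat\mu,\hat{\bm r})$, with equality if and only if there exists $\lambda$ such that $\Phi^\lambda=\Phi$.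
   Context: Setting. $\mathcal X,\mathcal Y$ finite sets of groups of men and women, $\mathcal X_0=\mathcal X\cup\{0\}$, $\mathcal Y_0=\mathcal Y\cup\{0\}$ ($0$ = singlehood), continuum populations with masses $\bm r=(\bm n,\bm m)$. Each man of group $x$ has a vector $\varepsilon\in\mathbb R^{\mathcal Y_0}$ distributed as $P_x$, each woman of group $y$ a vector $\eta\in\mathbb R^{\mathcal X_0}$ distributed as $Q_y$. Separability: for a surplus matrix $\Phi=(\Phi_{xy})$, the joint surplus of a match between man $i$ (group $x$) and woman $j$ (group $y$) is $\Phi_{xy}+\varepsilon_{iy}+\eta_{xj}$ and singles get $\varepsilon_{i0}$, $\eta_{0j}$; $\max_y|\varepsilon_y|$ and $\max_x|\eta_x|$ are integrable. Full support: each $P_x$, $Q_y$ has full support and is absolutely continuous with respect to Lebesgue measure. Utility is transferable; a group-level matching $\mu=(\mu_{xy})_{x\in\mathcal X,y\in\mathcal Y}$ records the masses of couples; $\mathcal M(\bm r)=\{\mu\ge0:\sum_y\mu_{xy}\le n_x,\ \sum_x\mu_{xy}\le m_y\}$. $G(\bm U,\bm n)=\sum_x n_x\mathbb E_{P_x}\max_{y\in\mathcal Y_0}(U_{xy}+\varepsilon_y)$ (with $U_{x0}=0$), $H(\bm V,\bm m)=\sum_ym_y\mathbb E_{Q_y}\max_{x\in\mathcal X_0}(V_{xy}+\eta_x)$ (with $V_{0y}=0$), $G^*(\mu,\bm n)=\sup_{\bm U}(\sum\mu_{xy}U_{xy}-G(\bm U,\bm n))$, $H^*(\mu,\bm m)=\sup_{\bm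 V}(\sum\mu_{xy}V_{xy}-H(\bm V,\bm m))$, and the generalized entropy is $\mathcal E(\mu,\bm r)=-G^*(\mu,\bm n)-H^*(\mu,\bm m)$. The social welfare is $\mathcal W(\Phi,\bm r)=\max_{\mu}\left(\sum_{x,y}\mu_{xy}\Phi_{xy}+\mathcal E(\mu,\bm r)\right)$, whose maximizer is the stable matching. Semilinear model: $\Phi^\lambda_{xy}=\sum_{k=1}^K\lambda_k\phi^k_{xy}$ for $\lambda\in\mathbb R^K$, where $\phi^1,\dots,\phi^K\in\mathbb R^{\mathcal X\times\mathcal Y}$ are known linearly independent basis surplus vectors. The comoments of a matching $\mu$ are $C^k(\mu)=\sum_{x,y}\mu_{xy}\phi^k_{xy}$. *)

theory Defs
  imports "HOL-Probability.Probability"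
begin

(* Groups of men: finite type 'x; groups of women: finite type 'y.
   X0 = 'x option, Y0 = 'y option, where None stands for singlehood (0).
   A man's taste vector epsilon lives in real^('y option), a woman's eta in real^('x option). *)

definition extU :: "('x \<Rightarrow> 'y \<Rightarrow> real) \<Rightarrow> 'x \<Rightarrow> 'y option \<Rightarrow> real" where
  "extU U x z = (case z of None \<Rightarrow> 0 | Some y \<Rightarrow> U x y)"

definition extV :: "('x \<Rightarrow> 'y \<Rightarrow> real) \<Rightarrow> 'y \<Rightarrow> 'x option \<Rightarrow> real" where
  "extV V y z = (case z of None \<Rightarrow> 0 | Some x \<Rightarrow> V x y)"

definition Gfun :: "('x::finite \<Rightarrow> (real^('y::finite option)) measure) \<Rightarrow>
    ('x \<Rightarrow> 'y \<Rightarrow> real) \<Rightarrow> ('x \<Rightarrow> real) \<Rightarrow> real" where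
  "Gfun P U n = (\<Sum>x\<in>UNIV. n x * (\<integral>e. Max (range (\<lambda>z. extU U x z + e $ z)) \<partial>(P x)))"

definition Hfun :: "('y::finite \<Rightarrow> (real^('x::finite option)) measure) \<Rightarrow>
    ('x \<Rightarrow> 'y \<Rightarrow> real) \<Rightarrow> ('y \<Rightarrow> real) \<Rightarrow> real" where
  "Hfun Q V m = (\<Sum>y\<in>UNIV. m y * (\<integral>e. Max (range (\<lambda>z. extV V y z + e $ z)) \<partial>(Q y)))"

definition total_surplus :: "('x::finite \<Rightarrow> 'y::finite \<Rightarrow> real) \<Rightarrow> ('x \<Rightarrow> 'y \<Rightarrow> real) \<Rightarrow> real" where
  "total_surplus \<mu> \<Phi> = (\<Sum>x\<in>UNIV. \<Sum>y\<in>UNIV. \<mu> x y * \<Phi> x y)"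

definition Gstar :: "('x::finite \<Rightarrow> (real^('y::finite option)) measure) \<Rightarrow>
    ('x \<Rightarrow> 'y \<Rightarrow> real) \<Rightarrow> ('x \<Rightarrow> real) \<Rightarrow> ereal" where
  "Gstar P \<mu> n = (SUP U. ereal (total_surplus \<mu> U - Gfun P U n))"

definition Hstar :: "('y::finite \<Rightarrow> (real^('x::finite option)) measure) \<Rightarrow>
    ('x \<Rightarrow> 'y \<Rightarrow> real) \<Rightarrow> ('y \<Rightarrow> real) \<Rightarrow> ereal" where
  "Hstar Q \<mu> m = (SUP V. ereal (total_surplus \<mu> V - Hfun Q V m))"

definition entropy :: "('x::finite \<Rightarrow> (real^('y::finite option)) measure) \<Rightarrow>
    ('y \<Rightarrow> (real^('x option)) measure) \<Rightarrow>
    ('x \<Rightarrow> 'y \<Rightarrow> real) \<Rightarrow> ('x \<Rightarrow> real) \<Rightarrow> ('y \<Rightarrow> real) \<Rightarrow> ereal" where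
  "entropy P Q \<mu> n m = - (Gstar P \<mu> n + Hstar Q \<mu> m)"

definition matchings :: "('x::finite \<Rightarrow> real) \<Rightarrow> ('y::finite \<Rightarrow> real) \<Rightarrow> ('x \<Rightarrow> 'y \<Rightarrow> real) set" where
  "matchings n m = {\<mu>. (\<forall>x y. 0 \<le> \<mu> x y) \<and> (\<forall>x. (\<Sum>y\<in>UNIV. \<mu> x y) \<le> n x)
                        \<and> (\<forall>y. (\<Sum>x\<in>UNIV. \<mu> x y) \<le> m y)}"

definition welfare :: "('x::finite \<Rightarrow> (real^('y::finite option)) measure) \<Rightarrow>
    ('y \<Rightarrow> (real^('x option)) measure) \<Rightarrow>
    ('x \<Rightarrow> 'y \<Rightarrow> real) \<Rightarrow> ('x \<Rightarrow> real) \<Rightarrow> ('y \<Rightarrow> real) \<Rightarrow> ereal" where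
  "welfare P Q \<Phi> n m = (SUP \<mu>\<in>matchings n m. ereal (total_surplus \<mu> \<Phi>) + entropy P Q \<mu> n m)"

definition stable_matching :: "('x::finite \<Rightarrow> (real^('y::finite option)) measure) \<Rightarrow>
    ('y \<Rightarrow> (real^('x option)) measure) \<Rightarrow>
    ('x \<Rightarrow> 'y \<Rightarrow> real) \<Rightarrow> ('x \<Rightarrow> real) \<Rightarrow> ('y \<Rightarrow> real) \<Rightarrow> ('x \<Rightarrow> 'y \<Rightarrow> real) \<Rightarrow> bool" where
  "stable_matching P Q \<Phi> n m \<mu> \<longleftrightarrow>
     \<mu> \<in> matchings n m \<and> ereal (total_surplus \<mu> \<Phi>) + entropy P Q \<mu> n m = welfare P Q \<Phi> n m"

definition Phi_lin :: "('k::finite \<Rightarrow> 'x \<Rightarrow> 'y \<Rightarrow> real) \<Rightarrow> ('k \<Rightarrow> real) \<Rightarrow> 'x \<Rightarrow> 'y \<Rightarrow> real" where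
  "Phi_lin phi lam = (\<lambda>x y. \<Sum>k\<in>UNIV. lam k * phi k x y)"

definition comoment :: "('k \<Rightarrow> 'x::finite \<Rightarrow> 'y::finite \<Rightarrow> real) \<Rightarrow> 'k \<Rightarrow> ('x \<Rightarrow> 'y \<Rightarrow> real) \<Rightarrow> real" where
  "comoment phi k \<mu> = (\<Sum>x\<in>UNIV. \<Sum>y\<in>UNIV. \<mu> x y * phi k x y)"

definition entropy_max :: "('x::finite \<Rightarrow> (real^('y::finite option)) measure) \<Rightarrow>
    ('y \<Rightarrow> (real^('x option)) measure) \<Rightarrow> ('k \<Rightarrow> 'x \<Rightarrow> 'y \<Rightarrow> real) \<Rightarrow>
    ('x \<Rightarrow> 'y \<Rightarrow> real) \<Rightarrow> ('x \<Rightarrow> real) \<Rightarrow> ('y \<Rightarrow> real) \<Rightarrow> ereal" where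
  "entropy_max P Q phi muhat n m =
     (SUP \<mu>\<in>{\<mu>\<in>matchings n m. \<forall>k. comoment phi k \<mu> = comoment phi k muhat}. entropy P Q \<mu> n m)"

(* lam is a vector of Lagrange multipliers for the comoment equality constraints:
   the optimal value equals the supremum of the Lagrangian
   E(mu) + sum_k lam_k (C^k(mu) - C^k(muhat)) over mu in M(r) (no duality gap, dual attained at lam). *)
definition is_lagrange_mult :: "('x::finite \<Rightarrow> (real^('y::finite option)) measure) \<Rightarrow>
    ('y \<Rightarrow> (real^('x option)) measure) \<Rightarrow> ('k::finite \<Rightarrow> 'x \<Rightarrow> 'y \<Rightarrow> real) \<Rightarrow>
    ('x \<Rightarrow> 'y \<Rightarrow> real) \<Rightarrow> ('x \<Rightarrow> real) \<Rightarrow> ('y \<Rightarrow> real) \<Rightarrow> ('k \<Rightarrow> real) \<Rightarrow> bool" where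
  "is_lagrange_mult P Q phi muhat n m lam \<longleftrightarrow>
     entropy_max P Q phi muhat n m =
       (SUP \<mu>\<in>matchings n m. entropy P Q \<mu> n m
          + ereal (\<Sum>k\<in>UNIV. lam k * (comoment phi k \<mu> - comoment phi k muhat)))"

definition MM_estimator :: "('x::finite \<Rightarrow> (real^('y::finite option)) measure) \<Rightarrow>
    ('y \<Rightarrow> (real^('x option)) measure) \<Rightarrow> ('k::finite \<Rightarrow> 'x \<Rightarrow> 'y \<Rightarrow> real) \<Rightarrow>
    ('x \<Rightarrow> 'y \<Rightarrow> real) \<Rightarrow> ('x \<Rightarrow> real) \<Rightarrow> ('y \<Rightarrow> real) \<Rightarrow> ('k \<Rightarrow> real) \<Rightarrow> bool" where
  "MM_estimator P Q phi muhat n m lam \<longleftrightarrow>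
     (\<forall>l. ereal (total_surplus muhat (Phi_lin phi l)) - welfare P Q (Phi_lin phi l) n m
          \<le> ereal (total_surplus muhat (Phi_lin phi lam)) - welfare P Q (Phi_lin phi lam) n m)"

definition full_support_ac :: "('a::euclidean_space) measure \<Rightarrow> bool" where
  "full_support_ac M \<longleftrightarrow> prob_space M \<and> sets M = sets borel \<and> absolutely_continuous lborel M
     \<and> (\<forall>U. open U \<and> U \<noteq> {} \<longrightarrow> 0 < emeasure M U)"

end

theory Submission
  imports Defs
begin

text \<open>The welfare is a dual value: \<open>W(\<Phi>) = min\<^sub>U G(U) + H(\<Phi> - U)\<close>. The minimum exists since
  \<open>G\<close> and \<open>H\<close> are continuous and coercive, and at a minimizer the gradients of \<open>G\<close> and \<open>H\<close>,
  the masses times the choice probabilities of the two sides, coincide; their common value is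
  the stable matching. Full support makes choice probabilities injective in the systematic
  utilities, so a stable matching determines its surplus matrix.

  Shifting \<open>U\<close> together with \<open>\<Phi>\<close> shows that along any direction \<open>E\<close> the welfare grows at
  most at rate \<open>\<mu> \<cdot> E\<close>, \<open>\<mu>\<close> the stable matching; optimality of the moment-matching
  estimator gives growth at least \<open>muhat \<cdot> E\<close> along \<open>E = \<plusminus>\<phi>\<^sup>k\<close>, so the comoments agree.
  Then for every matching \<open>\<nu>\<close> the Lagrangian \<open>E(\<nu>) + \<nu> \<cdot> \<Phi>\<^sup>\<lambda> - muhat \<cdot> \<Phi>\<^sup>\<lambda>\<close> is at most
  \<open>W(\<Phi>\<^sup>\<lambda>) - muhat \<cdot> \<Phi>\<^sup>\<lambda> = E(\<mu>\<^sup>\<lambda>)\<close>, which yields the multiplier property and \<open>E\<^sub>m\<^sub>a\<^sub>x = E(\<mu>\<^sup>\<lambda>)\<close>.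
  Finally \<open>E(muhat) = E\<^sub>m\<^sub>a\<^sub>x\<close> says that \<open>muhat\<close> is also stable for \<open>\<Phi>\<^sup>\<lambda>\<close>, hence \<open>\<Phi> = \<Phi>\<^sup>\<lambda>\<close>.\<close>

section \<open>Expected maximum utility of a single agent\<close>

definition ext_zero :: "('a \<Rightarrow> real) \<Rightarrow> 'a option \<Rightarrow> real" where
  "ext_zero u z = (case z of None \<Rightarrow> 0 | Some a \<Rightarrow> u a)"

definition max_payoff :: "('a::finite \<Rightarrow> real) \<Rightarrow> real^('a option) \<Rightarrow> real" where
  "max_payoff u e = Max (range (\<lambda>z. ext_zero u z + e $ z))"

definition emax :: "(real^('a::finite option)) measure \<Rightarrow> ('a \<Rightarrow> real) \<Rightarrow> real" where
  "emax M u = (\<integral>e. max_payoff u e \<partial>M)"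

definition choice_set :: "('a::finite \<Rightarrow> real) \<Rightarrow> 'a option \<Rightarrow> (real^('a option)) set" where
  "choice_set u z = {e. \<forall>w. w \<noteq> z \<longrightarrow> ext_zero u w + e $ w < ext_zero u z + e $ z}"

definition choice_prob :: "(real^('a::finite option)) measure \<Rightarrow> ('a \<Rightarrow> real) \<Rightarrow> 'a \<Rightarrow> real" where
  "choice_prob M u a = measure M (choice_set u (Some a))"

definition l1_norm :: "('a::finite \<Rightarrow> real) \<Rightarrow> real" where
  "l1_norm u = (\<Sum>a\<in>UNIV. \<bar>u a\<bar>)"

definition max_abs :: "real^('a::finite option) \<Rightarrow> real" where
  "max_abs e = Max (range (\<lambda>z. \<bar>e $ z\<bar>))"

definition regular_taste :: "(real^('a::finite option)) measure \<Rightarrow> bool" where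
  "regular_taste M \<longleftrightarrow> full_support_ac M \<and> integrable M max_abs"

lemma ext_zero_lin: "ext_zero (\<lambda>a. u a + t * v a) z = ext_zero u z + t * ext_zero v z"
  by (simp add: ext_zero_def split: option.splits)

lemma ext_zero_convex_comb:
  "ext_zero (\<lambda>a. (1 - s) * u a + s * u' a) z = (1 - s) * ext_zero u z + s * ext_zero u' z"
  by (simp add: ext_zero_def split: option.splits)

lemma l1_norm_nonneg: "0 \<le> l1_norm u"
  unfolding l1_norm_def by (simp add: sum_nonneg)

lemma l1_norm_scale: "0 \<le> t \<Longrightarrow> l1_norm (\<lambda>a. t * v a) = t * l1_norm v"
  by (simp add: l1_norm_def abs_mult sum_distrib_left)

lemma ext_zero_diff_le: "\<bar>ext_zero u z - ext_zero u' z\<bar> \<le> l1_norm (\<lambda>a. u a - u' a)"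
proof (cases z)
  case None then show ?thesis by (simp add: ext_zero_def l1_norm_nonneg)
next
  case (Some a) then show ?thesis
    unfolding ext_zero_def l1_norm_def by (auto intro: member_le_sum[where f="\<lambda>a. \<bar>u a - u' a\<bar>"])
qed

lemma ext_zero_abs_le: "\<bar>ext_zero u z\<bar> \<le> l1_norm u"
  using ext_zero_diff_le[of u z "\<lambda>_. 0"] by (simp add: ext_zero_def split: option.splits)

lemma max_payoff_ge: "ext_zero u z + e $ z \<le> max_payoff u e"
  unfolding max_payoff_def by (rule Max_ge) auto

lemma max_payoff_attained:
  obtains z where "max_payoff u e = ext_zero u z + e $ z"
proof -
  have "max_payoff u e \<in> range (\<lambda>z. ext_zero u z + e $ z)"
    unfolding max_payoff_def by (rule Max_in) auto
  then show ?thesis using that by auto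
qed

lemma max_abs_ge: "\<bar>e $ z\<bar> \<le> max_abs e"
  unfolding max_abs_def by (rule Max_ge) auto

lemma max_payoff_lipschitz: "\<bar>max_payoff u e - max_payoff u' e\<bar> \<le> l1_norm (\<lambda>a. u a - u' a)"
proof -
  have "max_payoff u e - max_payoff u' e \<le> l1_norm (\<lambda>a. u a - u' a)" for u u'
  proof -
    obtain z where "max_payoff u e = ext_zero u z + e $ z" by (rule max_payoff_attained)
    with max_payoff_ge[of u' z e] ext_zero_diff_le[of u z u'] show ?thesis by linarith
  qed
  from this[of u u'] this[of u' u] show ?thesis
    by (simp add: l1_norm_def abs_minus_commute)
qed

lemma max_payoff_abs_le: "\<bar>max_payoff u e\<bar> \<le> l1_norm u + max_abs e"
proof -
  obtain z where z: "max_payoff u e = ext_zero u z + e $ z" by (rule max_payoff_attained)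
  have "- max_abs e \<le> max_payoff u e"
    using max_payoff_ge[of u None e] max_abs_ge[of e None] by (simp add: ext_zero_def)
  moreover have "max_payoff u e \<le> l1_norm u + max_abs e"
    using z ext_zero_abs_le[of u z] max_abs_ge[of e z] by linarith
  ultimately show ?thesis using l1_norm_nonneg[of u] by linarith
qed

lemma max_payoff_convex:
  assumes "0 \<le> s" "s \<le> 1"
  shows "max_payoff (\<lambda>a. (1 - s) * u a + s * u' a) e \<le> (1 - s) * max_payoff u e + s * max_payoff u' e"
proof -
  obtain z where z: "max_payoff (\<lambda>a. (1 - s) * u a + s * u' a) e
      = ext_zero (\<lambda>a. (1 - s) * u a + s * u' a) z + e $ z"
    by (rule max_payoff_attained)
  have "(1 - s) * (ext_zero u z + e $ z) \<le> (1 - s) * max_payoff u e"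
    using assms max_payoff_ge[of u z e] by (intro mult_left_mono) auto
  moreover have "s * (ext_zero u' z + e $ z) \<le> s * max_payoff u' e"
    using assms max_payoff_ge[of u' z e] by (intro mult_left_mono) auto
  ultimately show ?thesis using z unfolding ext_zero_convex_comb by (simp add: algebra_simps)
qed

lemma choice_set_disjoint: "e \<in> choice_set u z \<Longrightarrow> e \<in> choice_set u z' \<Longrightarrow> z = z'"
  unfolding choice_set_def using less_asym by blast

lemma max_payoff_on_choice_set: "e \<in> choice_set u z \<Longrightarrow> max_payoff u e = ext_zero u z + e $ z"
proof -
  assume e: "e \<in> choice_set u z"
  obtain z' where z': "max_payoff u e = ext_zero u z' + e $ z'" by (rule max_payoff_attained)
  with e max_payoff_ge[of u z e] have "z' = z" unfolding choice_set_def by force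
  with z' show ?thesis by simp
qed

lemma max_payoff_perturb:
  assumes "0 \<le> t"
    and gap: "\<forall>w. w \<noteq> z \<longrightarrow> ext_zero u w + e $ w + 2 * t * l1_norm v < ext_zero u z + e $ z"
  shows "max_payoff (\<lambda>a. u a + t * v a) e = ext_zero (\<lambda>a. u a + t * v a) z + e $ z"
proof -
  obtain z' where z': "max_payoff (\<lambda>a. u a + t * v a) e = ext_zero (\<lambda>a. u a + t * v a) z' + e $ z'"
    by (rule max_payoff_attained)
  have perturb: "\<bar>t * ext_zero v w\<bar> \<le> t * l1_norm v" for w
    using ext_zero_abs_le[of v w] assms(1) by (simp add: abs_mult mult_left_mono)
  have "z' = z"
  proof (rule ccontr)
    assume "z' \<noteq> z"
    with gap have "ext_zero u z' + e $ z' + 2 * t * l1_norm v < ext_zero u z + e $ z" by auto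
    with z' max_payoff_ge[of "\<lambda>a. u a + t * v a" z e] perturb[of z] perturb[of z']
    show False unfolding ext_zero_lin by linarith
  qed
  then show ?thesis using z' by simp
qed

lemma max_payoff_measurable[measurable]: "max_payoff u \<in> borel_measurable borel"
  unfolding max_payoff_def by measurable

lemma choice_set_borel: "choice_set u z \<in> sets borel"
  unfolding choice_set_def by measurable

lemma open_choice_set: "open (choice_set u z)"
proof -
  have "choice_set u z = (\<Inter>w\<in>-{z}. {e. ext_zero u w + e $ w < ext_zero u z + e $ z})"
    unfolding choice_set_def by auto
  then show ?thesis by (simp add: open_INT open_Collect_less continuous_on_add continuous_on_component)
qed

lemma regular_taste_prob_space: "regular_taste M \<Longrightarrow> prob_space M"
  unfolding regular_taste_def full_support_ac_def by auto

lemma regular_taste_sets: "regular_taste M \<Longrightarrow> sets M = sets borel"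
  unfolding regular_taste_def full_support_ac_def by auto

lemma regular_taste_space: "regular_taste M \<Longrightarrow> space M = UNIV"
  using regular_taste_sets[THEN sets_eq_imp_space_eq] by simp

lemma regular_taste_measurable:
  "regular_taste M \<Longrightarrow> f \<in> borel_measurable borel \<Longrightarrow> f \<in> borel_measurable M"
  using regular_taste_sets measurable_cong_sets by blast

lemma regular_taste_integrable_const: "regular_taste M \<Longrightarrow> integrable M (\<lambda>_. c::real)"
  using regular_taste_prob_space prob_space.finite_measure finite_measure.integrable_const by blast

lemma integrable_max_payoff:
  assumes M: "regular_taste M" shows "integrable M (max_payoff u)"
proof (rule Bochner_Integration.integrable_bound[where f="\<lambda>e. l1_norm u + max_abs e"])
  show "integrable M (\<lambda>e. l1_norm u + max_abs e)"
    using M unfolding regular_taste_def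
    by (intro Bochner_Integration.integrable_add regular_taste_integrable_const[OF M]) simp
  show "max_payoff u \<in> borel_measurable M"
    by (rule regular_taste_measurable[OF M max_payoff_measurable])
  show "AE e in M. norm (max_payoff u e) \<le> norm (l1_norm u + max_abs e)"
  proof (rule AE_I2)
    fix e :: "real^('a option)"
    have "0 \<le> l1_norm u + max_abs e" using max_abs_ge[of e None] l1_norm_nonneg[of u] by linarith
    then show "norm (max_payoff u e) \<le> norm (l1_norm u + max_abs e)"
      using max_payoff_abs_le[of u e] by simp
  qed
qed

lemma emax_lipschitz:
  assumes M: "regular_taste M" shows "\<bar>emax M u - emax M u'\<bar> \<le> l1_norm (\<lambda>a. u a - u' a)"
proof -
  have "emax M u - emax M u' = (\<integral>e. max_payoff u e - max_payoff u' e \<partial>M)"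
    unfolding emax_def using integrable_max_payoff[OF M] by simp
  also have "\<bar>\<dots>\<bar> \<le> (\<integral>e. \<bar>max_payoff u e - max_payoff u' e\<bar> \<partial>M)"
    by (rule integral_abs_bound)
  also have "\<dots> \<le> (\<integral>e. l1_norm (\<lambda>a. u a - u' a) \<partial>M)"
    by (rule integral_mono)
       (use integrable_max_payoff[OF M] regular_taste_integrable_const[OF M] max_payoff_lipschitz in auto)
  also have "\<dots> = l1_norm (\<lambda>a. u a - u' a)"
    using prob_space.prob_space[OF regular_taste_prob_space[OF M]] by simp
  finally show ?thesis .
qed

lemma emax_convex:
  assumes M: "regular_taste M" and "0 \<le> s" "s \<le> 1"
  shows "emax M (\<lambda>a. (1 - s) * u a + s * u' a) \<le> (1 - s) * emax M u + s * emax M u'"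
proof -
  have "emax M (\<lambda>a. (1 - s) * u a + s * u' a) \<le> (\<integral>e. (1 - s) * max_payoff u e + s * max_payoff u' e \<partial>M)"
    unfolding emax_def
    by (rule integral_mono) (use integrable_max_payoff[OF M] max_payoff_convex assms in auto)
  also have "\<dots> = (1 - s) * emax M u + s * emax M u'"
    unfolding emax_def using integrable_max_payoff[OF M] by simp
  finally show ?thesis .
qed

lemma emax_lower_bound:
  assumes M: "regular_taste M"
  shows "max 0 (u a) - (\<integral>e. max_abs e \<partial>M) \<le> emax M u"
proof -
  have "ext_zero u z - (\<integral>e. max_abs e \<partial>M) \<le> emax M u" for z
  proof -
    have "ext_zero u z - max_abs e \<le> max_payoff u e" for e
      using max_payoff_ge[of u z e] max_abs_ge[of e z] by linarith
    then have "(\<integral>e. ext_zero u z - max_abs e \<partial>M) \<le> emax M u"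
      unfolding emax_def using M integrable_max_payoff[OF M] regular_taste_integrable_const[OF M]
      by (intro integral_mono) (auto simp: regular_taste_def)
    then show ?thesis
      using M regular_taste_integrable_const[OF M] prob_space.prob_space[OF regular_taste_prob_space[OF M]]
      by (simp add: regular_taste_def)
  qed
  from this[of None] this[of "Some a"] show ?thesis by (simp add: ext_zero_def)
qed

text \<open>Ties between two alternatives lie on a hyperplane, which is Lebesgue-null.\<close>
lemma AE_no_tie:
  assumes M: "regular_taste M" and "a \<noteq> b"
  shows "AE e in M. e $ a + c \<noteq> e $ b"
proof -
  let ?w = "axis a (1::real) - axis b 1"
  have "?w \<noteq> 0"
    using assms(2) by (metis axis_eq_axis eq_iff_diff_eq_0 zero_neq_one)
  then have "negligible {e. ?w \<bullet> e = - c}" using negligible_hyperplane by blast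
  then have "{e. ?w \<bullet> e = - c} \<in> null_sets lborel"
    using closed_hyperplane negligible_iff_null_sets null_sets_completion_iff
    by (metis borel_closed sets_lborel)
  then have "AE e in lborel. e $ a + c \<noteq> e $ b"
    by (rule AE_not_in[THEN AE_mp]) (auto simp: inner_diff_left inner_axis')
  moreover have "absolutely_continuous lborel M" "sets M = sets lborel"
    using M unfolding regular_taste_def full_support_ac_def by auto
  ultimately show ?thesis using absolutely_continuous_AE by blast
qed

lemma AE_unique_choice:
  assumes M: "regular_taste M" shows "AE e in M. \<exists>z. e \<in> choice_set u z"
proof -
  have "AE e in M. \<forall>p\<in>{p. fst p \<noteq> snd p}.
          e $ fst p + (ext_zero u (fst p) - ext_zero u (snd p)) \<noteq> e $ snd p"
    by (rule AE_finite_allI) (use AE_no_tie[OF M] in auto)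
  then show ?thesis
  proof (rule AE_mp, intro AE_I2 impI)
    fix e assume no_tie: "\<forall>p\<in>{p. fst p \<noteq> snd p}.
          e $ fst p + (ext_zero u (fst p) - ext_zero u (snd p)) \<noteq> e $ snd p"
    obtain z where z: "max_payoff u e = ext_zero u z + e $ z" by (rule max_payoff_attained)
    have "e \<in> choice_set u z"
      unfolding choice_set_def
    proof (intro CollectI allI impI)
      fix w assume "w \<noteq> z"
      with no_tie have "ext_zero u w + e $ w \<noteq> ext_zero u z + e $ z" by force
      with max_payoff_ge[of u w e] z show "ext_zero u w + e $ w < ext_zero u z + e $ z" by simp
    qed
    then show "\<exists>z. e \<in> choice_set u z" by blast
  qed
qed

definition step :: "nat \<Rightarrow> real" where "step k = 1 / real (Suc k)"

lemma step_pos: "0 < step k"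
  unfolding step_def by simp

lemma step_le_1: "step k \<le> 1"
  unfolding step_def by simp

lemma step_tendsto_0: "step \<longlonglongrightarrow> 0"
  unfolding step_def using LIMSEQ_inverse_real_of_nat by (simp add: inverse_eq_divide)

lemma max_payoff_diff_quotient:
  assumes e: "e \<in> choice_set u z"
  shows "\<forall>\<^sub>F k in sequentially. (max_payoff (\<lambda>a. u a + step k * v a) e - max_payoff u e) / step k
           = ext_zero v z"
proof -
  have "\<forall>\<^sub>F k in sequentially. \<forall>w. w \<noteq> z \<longrightarrow>
          ext_zero u w + e $ w + 2 * step k * l1_norm v < ext_zero u z + e $ z"
  proof (rule eventually_all_finite, cases)
    fix w assume "w \<noteq> z"
    then have "0 < ext_zero u z + e $ z - (ext_zero u w + e $ w)" using e unfolding choice_set_def by auto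
    moreover have "(\<lambda>k. 2 * step k * l1_norm v) \<longlonglongrightarrow> 2 * 0 * l1_norm v"
      by (intro tendsto_intros step_tendsto_0)
    ultimately have "\<forall>\<^sub>F k in sequentially. 2 * step k * l1_norm v < ext_zero u z + e $ z - (ext_zero u w + e $ w)"
      by (simp add: order_tendstoD(2))
    then show "\<forall>\<^sub>F k in sequentially. w \<noteq> z \<longrightarrow>
          ext_zero u w + e $ w + 2 * step k * l1_norm v < ext_zero u z + e $ z"
      by eventually_elim auto
  qed simp
  then show ?thesis
  proof eventually_elim
    case (elim k)
    then have "max_payoff (\<lambda>a. u a + step k * v a) e = ext_zero u z + step k * ext_zero v z + e $ z"
      using max_payoff_perturb[OF less_imp_le[OF step_pos]] by (simp add: ext_zero_lin)
    with max_payoff_on_choice_set[OF e] step_pos[of k] show ?case by simp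
  qed
qed

lemma max_payoff_diff_quotient_bound:
  assumes "0 < t"
  shows "\<bar>(max_payoff (\<lambda>a. u a + t * v a) e - max_payoff u e) / t\<bar> \<le> l1_norm v"
proof -
  have "\<bar>max_payoff (\<lambda>a. u a + t * v a) e - max_payoff u e\<bar> \<le> t * l1_norm v"
    using max_payoff_lipschitz[of "\<lambda>a. u a + t * v a" e u] l1_norm_scale[of t v] assms by simp
  then show ?thesis using assms by (simp add: divide_le_eq mult.commute)
qed

lemma sum_indicator_choice_set:
  assumes e: "e \<in> choice_set u z"
  shows "(\<Sum>a\<in>UNIV. v a * indicator (choice_set u (Some a)) e) = ext_zero v z"
proof -
  have "e \<in> choice_set u (Some a) \<longleftrightarrow> z = Some a" for a
    using choice_set_disjoint[OF e, of "Some a"] e by blast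
  then have "(\<lambda>a. v a * indicator (choice_set u (Some a)) e) = (\<lambda>a. if z = Some a then v a else 0)"
    by (auto simp: indicator_def)
  then have "(\<Sum>a\<in>UNIV. v a * indicator (choice_set u (Some a)) e)
      = (\<Sum>a\<in>UNIV. if z = Some a then v a else 0)"
    by (simp only:)
  then show ?thesis by (cases z) (simp_all add: ext_zero_def)
qed

lemma integral_choice_indicators:
  assumes M: "regular_taste M"
  shows "(\<integral>e. (\<Sum>a\<in>UNIV. v a * indicator (choice_set u (Some a)) e) \<partial>M)
    = (\<Sum>a\<in>UNIV. v a * choice_prob M u a)"
proof -
  interpret prob_space M using regular_taste_prob_space[OF M] .
  have sets: "choice_set u z \<in> events" for z
    using M choice_set_borel by (simp add: regular_taste_sets)
  have "(\<integral>e. (\<Sum>a\<in>UNIV. v a * indicator (choice_set u (Some a)) e) \<partial>M)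
      = (\<Sum>a\<in>UNIV. \<integral>e. v a * indicator (choice_set u (Some a)) e \<partial>M)"
    by (rule Bochner_Integration.integral_sum)
       (auto intro!: integrable_real_indicator simp: sets emeasure_finite[unfolded less_top])
  then show ?thesis unfolding choice_prob_def using regular_taste_space[OF M] by simp
qed

text \<open>The choice probabilities are the gradient of \<open>emax\<close>: the difference quotients of
  \<open>max_payoff\<close> converge almost surely, because the maximizer is a.s. unique, and they are
  dominated by \<open>l1_norm v\<close>.\<close>
lemma emax_directional_derivative:
  assumes M: "regular_taste M"
  shows "(\<lambda>k. (emax M (\<lambda>a. u a + step k * v a) - emax M u) / step k)
           \<longlonglongrightarrow> (\<Sum>a\<in>UNIV. v a * choice_prob M u a)"
proof -
  define q where "q k e = (max_payoff (\<lambda>a. u a + step k * v a) e - max_payoff u e) / step k" for k e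
  define f where "f e = (\<Sum>a\<in>UNIV. v a * indicator (choice_set u (Some a)) e)" for e :: "real^('a option)"
  have sets[measurable]: "choice_set u z \<in> sets M" for z
    using M choice_set_borel by (simp add: regular_taste_sets)
  have "(\<lambda>k. \<integral>e. q k e \<partial>M) \<longlonglongrightarrow> (\<integral>e. f e \<partial>M)"
  proof (rule integral_dominated_convergence)
    show "f \<in> borel_measurable M"
      unfolding f_def by measurable
    show "q k \<in> borel_measurable M" for k
      by (rule regular_taste_measurable[OF M]) (unfold q_def, measurable)
    show "integrable M (\<lambda>_. l1_norm v)" by (rule regular_taste_integrable_const[OF M])
    show "AE e in M. (\<lambda>k. q k e) \<longlonglongrightarrow> f e"
      using AE_unique_choice[OF M, of u]
    proof eventually_elim
      case (elim e)
      then obtain z where z: "e \<in> choice_set u z" by blast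
      show ?case
        unfolding q_def f_def sum_indicator_choice_set[OF z]
        by (rule tendsto_eventually[OF max_payoff_diff_quotient[OF z]])
    qed
    show "AE e in M. norm (q k e) \<le> l1_norm v" for k
      unfolding q_def using max_payoff_diff_quotient_bound[OF step_pos] by (intro AE_I2) simp
  qed
  moreover have "(\<integral>e. q k e \<partial>M) = (emax M (\<lambda>a. u a + step k * v a) - emax M u) / step k" for k
    unfolding emax_def q_def using integrable_max_payoff[OF M] by simp
  moreover have "(\<integral>e. f e \<partial>M) = (\<Sum>a\<in>UNIV. v a * choice_prob M u a)"
    unfolding f_def by (rule integral_choice_indicators[OF M])
  ultimately show ?thesis by simp
qed

lemma emax_subgradient:
  assumes M: "regular_taste M"
  shows "(\<Sum>a\<in>UNIV. (u' a - u a) * choice_prob M u a) \<le> emax M u' - emax M u"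
proof (rule LIMSEQ_le_const2[OF emax_directional_derivative[OF M, of u "\<lambda>a. u' a - u a"]], intro exI allI impI)
  fix k :: nat
  have "(\<lambda>a. u a + step k * (u' a - u a)) = (\<lambda>a. (1 - step k) * u a + step k * u' a)"
    by (auto simp: algebra_simps)
  then have "emax M (\<lambda>a. u a + step k * (u' a - u a)) - emax M u \<le> step k * (emax M u' - emax M u)"
    using emax_convex[OF M, of "step k" u u'] step_pos[of k] step_le_1[of k] by (simp add: algebra_simps)
  then show "(emax M (\<lambda>a. u a + step k * (u' a - u a)) - emax M u) / step k \<le> emax M u' - emax M u"
    using step_pos[of k] by (simp add: divide_le_eq mult.commute)
qed

lemma choice_prob_nonneg: "0 \<le> choice_prob M u a"
  unfolding choice_prob_def by simp

lemma choice_prob_sum_le_1: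
  assumes M: "regular_taste M" shows "(\<Sum>a\<in>UNIV. choice_prob M u a) \<le> 1"
proof -
  interpret prob_space M using regular_taste_prob_space[OF M] .
  have sets: "choice_set u (Some a) \<in> sets M" for a
    using M choice_set_borel by (simp add: regular_taste_sets)
  have "disjoint_family (\<lambda>a. choice_set u (Some a))"
    unfolding disjoint_family_on_def by (fastforce dest: choice_set_disjoint)
  then have "(\<Sum>a\<in>UNIV. choice_prob M u a) = measure M (\<Union>a. choice_set u (Some a))"
    unfolding choice_prob_def using sets by (subst measure_finite_Union) auto
  also have "\<dots> \<le> 1" by (rule prob_le_1)
  finally show ?thesis .
qed

lemma choice_set_mono:
  assumes "\<And>w. ext_zero u' w - ext_zero u w \<le> ext_zero u' z - ext_zero u z"
  shows "choice_set u z \<subseteq> choice_set u' z"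
proof
  fix e assume "e \<in> choice_set u z"
  then show "e \<in> choice_set u' z"
    using assms unfolding choice_set_def by (smt (verit) mem_Collect_eq)
qed

text \<open>Witness: push the other alternatives far down and put the taste for \<open>a\<close> halfway between
  \<open>- u a\<close> and \<open>- u' a\<close>.\<close>
lemma choice_set_switch_nonempty:
  assumes "u a < u' a"
  shows "choice_set u' (Some a) \<inter> {e. u a + e $ Some a < e $ None} \<noteq> {}"
proof -
  define e0 :: "real^('a option)"
    where "e0 = (\<chi> w. if w = None then 0 else if w = Some a then - (u a + u' a) / 2 else - l1_norm u' - 1)"
  have "ext_zero u' w + e0 $ w \<le> 0" if "w \<noteq> Some a" for w
    using that ext_zero_abs_le[of u' w] by (cases w) (auto simp: e0_def ext_zero_def)
  moreover have "0 < ext_zero u' (Some a) + e0 $ Some a" "u a + e0 $ Some a < e0 $ None"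
    using assms by (simp_all add: e0_def ext_zero_def field_simps)
  ultimately have "e0 \<in> choice_set u' (Some a) \<inter> {e. u a + e $ Some a < e $ None}"
    unfolding choice_set_def by fastforce
  then show ?thesis by blast
qed

text \<open>Raising the utility of some alternative strictly raises the probability of choosing the
  alternative \<open>a\<close> whose utility gain is largest: the choice region of \<open>a\<close> grows, and by full
  support it gains an open set of positive measure.\<close>
lemma choice_prob_strict_increase:
  assumes M: "regular_taste M" and incr: "u b < u' b"
  obtains a where "choice_prob M u a < choice_prob M u' a"
proof -
  define d where "d z = ext_zero u' z - ext_zero u z" for z
  have "Max (range d) \<in> range d" by (rule Max_in) auto
  then obtain z0 where z0: "d z0 = Max (range d)" by (metis rangeE)
  have d_le: "d z \<le> d z0" for z unfolding z0 by (rule Max_ge) auto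
  have "0 < d z0" using d_le[of "Some b"] incr by (simp add: d_def ext_zero_def)
  then obtain a where a: "z0 = Some a" and gain_a: "u a < u' a"
    by (cases z0) (auto simp: d_def ext_zero_def)
  interpret prob_space M using regular_taste_prob_space[OF M] .
  have sets: "choice_set u z \<in> events" for u :: "'a \<Rightarrow> real" and z
    using M choice_set_borel by (simp add: regular_taste_sets)
  define gain where "gain = choice_set u' (Some a) \<inter> {e. u a + e $ Some a < e $ None}"
  have "open gain"
    unfolding gain_def by (intro open_Int open_choice_set open_Collect_less continuous_intros)
  then have "0 < emeasure M gain"
    using M choice_set_switch_nonempty[of u a u', OF gain_a] unfolding regular_taste_def full_support_ac_def gain_def
    by blast
  then have gain_pos: "0 < prob gain" by (simp add: emeasure_eq_measure)
  have gain_sets: "gain \<in> events" using M \<open>open gain\<close> by (simp add: regular_taste_sets borel_open)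
  have "choice_set u (Some a) \<subseteq> choice_set u' (Some a)"
    using d_le unfolding a[symmetric] d_def by (rule choice_set_mono)
  moreover have "gain \<subseteq> choice_set u' (Some a)" unfolding gain_def by blast
  moreover have "choice_set u (Some a) \<inter> gain = {}"
    unfolding gain_def choice_set_def by (auto dest!: spec[of _ None] simp: ext_zero_def)
  ultimately have "prob (choice_set u (Some a)) + prob gain \<le> prob (choice_set u' (Some a))"
    using sets gain_sets by (metis finite_measure_Union finite_measure_mono sup.boundedI)
  with gain_pos have "choice_prob M u a < choice_prob M u' a"
    unfolding choice_prob_def by linarith
  then show ?thesis by (rule that)
qed

lemma choice_prob_inj:
  assumes M: "regular_taste M" and eq: "\<And>a. choice_prob M u a = choice_prob M u' a"
  shows "u = u'"
proof (rule ccontr)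
  assume "u \<noteq> u'"
  then obtain b where "u b < u' b \<or> u' b < u b" by (meson ext neqE)
  then show False
    using choice_prob_strict_increase[OF M] eq by (metis less_irrefl)
qed

lemma emax_continuous:
  assumes M: "regular_taste M"
  shows "continuous_on UNIV (\<lambda>v::real^'a::finite. emax M (\<lambda>a. v $ a))"
proof (rule lipschitz_on_continuous_on, rule lipschitz_onI)
  fix v v' :: "real^'a"
  have component: "\<bar>v $ a - v' $ a\<bar> \<le> dist v v'" for a
    using component_le_norm_cart[of "v - v'" a] by (simp add: dist_norm)
  have "l1_norm (\<lambda>a. v $ a - v' $ a) \<le> (\<Sum>a\<in>(UNIV::'a set). dist v v')"
    unfolding l1_norm_def by (rule sum_mono) (rule component)
  then show "dist (emax M (\<lambda>a. v $ a)) (emax M (\<lambda>a. v' $ a)) \<le> real CARD('a) * dist v v'"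
    using emax_lipschitz[OF M, of "\<lambda>a. v $ a" "\<lambda>a. v' $ a"] by (simp add: dist_real_def)
qed simp

definition flip :: "('a \<Rightarrow> 'b \<Rightarrow> 'c) \<Rightarrow> 'b \<Rightarrow> 'a \<Rightarrow> 'c" where
  "flip f = (\<lambda>y x. f x y)"

lemma flip_flip[simp]: "flip (flip f) = f"
  unfolding flip_def by simp

lemma total_surplus_add: "total_surplus \<mu> (\<lambda>x y. U x y + V x y) = total_surplus \<mu> U + total_surplus \<mu> V"
  unfolding total_surplus_def by (simp add: algebra_simps sum.distrib)

lemma total_surplus_diff: "total_surplus \<mu> (\<lambda>x y. U x y - V x y) = total_surplus \<mu> U - total_surplus \<mu> V"
  unfolding total_surplus_def by (simp add: algebra_simps sum_subtractf)

lemma total_surplus_diff_left: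
  "total_surplus (\<lambda>x y. \<mu> x y - \<nu> x y) D = total_surplus \<mu> D - total_surplus \<nu> D"
  unfolding total_surplus_def by (simp add: algebra_simps sum_subtractf)

lemma total_surplus_scale: "total_surplus \<mu> (\<lambda>x y. t * D x y) = t * total_surplus \<mu> D"
  unfolding total_surplus_def by (simp add: algebra_simps sum_distrib_left)

lemma total_surplus_uminus: "total_surplus \<mu> (\<lambda>x y. - D x y) = - total_surplus \<mu> D"
  unfolding total_surplus_def by (simp add: sum_negf)

lemma total_surplus_flip: "total_surplus (flip \<mu>) (flip D) = total_surplus \<mu> D"
  unfolding total_surplus_def flip_def by (rule sum.swap)

lemma total_surplus_flip_left: "total_surplus (flip \<mu>) D = total_surplus \<mu> (flip D)"
  using total_surplus_flip[of \<mu> "flip D"] by simp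

lemma total_surplus_self_eq_0:
  fixes p :: "'x::finite \<Rightarrow> 'y::finite \<Rightarrow> real"
  assumes "total_surplus p p = 0" shows "p = (\<lambda>x y. 0)"
proof -
  have "\<forall>x. (\<Sum>y\<in>UNIV. p x y * p x y) = 0"
    using assms unfolding total_surplus_def by (subst (asm) sum_nonneg_eq_0_iff) (auto intro: sum_nonneg)
  then show ?thesis by (auto simp: sum_nonneg_eq_0_iff)
qed

lemma ereal_add_eq_imp_eq:
  fixes x y :: ereal
  assumes "ereal a \<le> x" "ereal b \<le> y" "x + y = ereal (a + b)"
  shows "x = ereal a" "y = ereal b"
  using assms by (cases x; cases y; simp)+

lemma gradient_unique:
  fixes f :: "('x::finite \<Rightarrow> 'y::finite \<Rightarrow> real) \<Rightarrow> real"
  assumes deriv: "\<And>D. (\<lambda>k. (f (\<lambda>x y. U x y + step k * D x y) - f U) / step k) \<longlonglongrightarrow> total_surplus p D"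
    and incr: "\<And>D k. step k * total_surplus q D \<le> f (\<lambda>x y. U x y + step k * D x y) - f U"
  shows "p = q"
proof -
  have le: "total_surplus q D \<le> total_surplus p D" for D
  proof (rule LIMSEQ_le_const[OF deriv], intro exI allI impI)
    fix k :: nat
    show "total_surplus q D \<le> (f (\<lambda>x y. U x y + step k * D x y) - f U) / step k"
      using incr[of k D] step_pos[of k] by (simp add: le_divide_eq mult.commute)
  qed
  have "total_surplus (\<lambda>x y. p x y - q x y) D = 0" for D
    using le[of D] le[of "\<lambda>x y. - D x y"] by (simp add: total_surplus_uminus total_surplus_diff_left)
  then have "(\<lambda>x y. p x y - q x y) = (\<lambda>x y. 0)" by (intro total_surplus_self_eq_0)
  then show ?thesis by (simp add: fun_eq_iff)
qed

section \<open>One side of the market\<close>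

locale market_side =
  fixes P :: "'x::finite \<Rightarrow> (real^('y::finite option)) measure" and n :: "'x \<Rightarrow> real"
  assumes regular: "\<And>x. regular_taste (P x)" and mass_pos: "\<And>x. 0 < n x"
begin

definition demand :: "('x \<Rightarrow> 'y \<Rightarrow> real) \<Rightarrow> 'x \<Rightarrow> 'y \<Rightarrow> real" where
  "demand U x y = n x * choice_prob (P x) (U x) y"

lemma Gfun_eq_sum_emax: "Gfun P U n = (\<Sum>x\<in>UNIV. n x * emax (P x) (U x))"
proof -
  have "extU U x = ext_zero (U x)" for x by (rule ext) (simp add: extU_def ext_zero_def)
  then show ?thesis unfolding Gfun_def emax_def max_payoff_def by simp
qed

lemma Gfun_directional_derivative:
  "(\<lambda>k. (Gfun P (\<lambda>x y. U x y + step k * D x y) n - Gfun P U n) / step k) \<longlonglongrightarrow> total_surplus (demand U) D"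
proof -
  have quotient: "(Gfun P (\<lambda>x y. U x y + step k * D x y) n - Gfun P U n) / step k
      = (\<Sum>x\<in>UNIV. n x * ((emax (P x) (\<lambda>y. U x y + step k * D x y) - emax (P x) (U x)) / step k))" for k
    unfolding Gfun_eq_sum_emax
    by (simp add: sum_subtractf sum_divide_distrib algebra_simps diff_divide_distrib)
  have "(\<lambda>k. \<Sum>x\<in>UNIV. n x * ((emax (P x) (\<lambda>y. U x y + step k * D x y) - emax (P x) (U x)) / step k))
     \<longlonglongrightarrow> (\<Sum>x\<in>UNIV. n x * (\<Sum>y\<in>UNIV. D x y * choice_prob (P x) (U x) y))"
    by (intro tendsto_intros emax_directional_derivative regular)
  also have "(\<Sum>x\<in>UNIV. n x * (\<Sum>y\<in>UNIV. D x y * choice_prob (P x) (U x) y)) = total_surplus (demand U) D"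
    unfolding total_surplus_def demand_def by (simp add: sum_distrib_left algebra_simps)
  finally show ?thesis unfolding quotient .
qed

lemma Gfun_subgradient: "total_surplus (demand U) (\<lambda>x y. U' x y - U x y) \<le> Gfun P U' n - Gfun P U n"
proof -
  have "total_surplus (demand U) (\<lambda>x y. U' x y - U x y)
      = (\<Sum>x\<in>UNIV. n x * (\<Sum>y\<in>UNIV. (U' x y - U x y) * choice_prob (P x) (U x) y))"
    unfolding total_surplus_def demand_def by (simp add: sum_distrib_left algebra_simps)
  also have "\<dots> \<le> (\<Sum>x\<in>UNIV. n x * (emax (P x) (U' x) - emax (P x) (U x)))"
    by (intro sum_mono mult_left_mono emax_subgradient regular less_imp_le mass_pos)
  also have "\<dots> = Gfun P U' n - Gfun P U n"
    unfolding Gfun_eq_sum_emax by (simp add: sum_subtractf algebra_simps)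
  finally show ?thesis .
qed

lemma Gfun_lower_bound:
  "n x * max 0 (U x y) - (\<Sum>x\<in>UNIV. n x * (\<integral>e. max_abs e \<partial>P x)) \<le> Gfun P U n"
proof -
  have "(\<Sum>x'\<in>UNIV. n x' * ((if x' = x then max 0 (U x y) else 0) - (\<integral>e. max_abs e \<partial>P x')))
      \<le> (\<Sum>x'\<in>UNIV. n x' * emax (P x') (U x'))"
  proof (intro sum_mono mult_left_mono less_imp_le[OF mass_pos])
    fix x'
    have "max 0 (U x' y) - (\<integral>e. max_abs e \<partial>P x') \<le> emax (P x') (U x')"
      by (rule emax_lower_bound[OF regular])
    then show "(if x' = x then max 0 (U x y) else 0) - (\<integral>e. max_abs e \<partial>P x') \<le> emax (P x') (U x')"
      by (cases "x' = x") auto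
  qed
  moreover have "(\<Sum>x'\<in>UNIV. n x' * ((if x' = x then max 0 (U x y) else 0) - (\<integral>e. max_abs e \<partial>P x')))
      = n x * max 0 (U x y) - (\<Sum>x\<in>UNIV. n x * (\<integral>e. max_abs e \<partial>P x))"
    by (simp add: right_diff_distrib sum_subtractf if_distrib[of "\<lambda>t. n _ * t"] cong: if_cong)
  ultimately show ?thesis unfolding Gfun_eq_sum_emax by simp
qed

lemma Gfun_continuous_on:
  assumes "\<And>x y. continuous_on S (\<lambda>w. f w x y)"
  shows "continuous_on S (\<lambda>w. Gfun P (f w) n)"
proof -
  have "continuous_on S (\<lambda>w. emax (P x) (\<lambda>y. (\<chi> y. f w x y) $ y))" for x
    by (rule continuous_on_compose2[OF emax_continuous[OF regular]])
       (auto intro!: continuous_on_vec_lambda assms)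
  then show ?thesis unfolding Gfun_eq_sum_emax by (auto intro!: continuous_intros)
qed

lemma demand_nonneg: "0 \<le> demand U x y"
  unfolding demand_def by (intro mult_nonneg_nonneg less_imp_le[OF mass_pos] choice_prob_nonneg)

lemma demand_row_sum_le: "(\<Sum>y\<in>UNIV. demand U x y) \<le> n x"
proof -
  have "(\<Sum>y\<in>UNIV. demand U x y) = n x * (\<Sum>y\<in>UNIV. choice_prob (P x) (U x) y)"
    unfolding demand_def by (simp add: sum_distrib_left)
  also have "\<dots> \<le> n x * 1"
    by (intro mult_left_mono choice_prob_sum_le_1 regular less_imp_le mass_pos)
  finally show ?thesis by simp
qed

lemma demand_inj:
  assumes "demand U = demand U'" shows "U = U'"
proof
  fix x
  have "choice_prob (P x) (U x) y = choice_prob (P x) (U' x) y" for y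
    using fun_cong[OF fun_cong[OF assms, of x], of y] mass_pos[of x] unfolding demand_def by simp
  then show "U x = U' x" by (rule choice_prob_inj[OF regular])
qed

lemma Gstar_ge: "ereal (total_surplus \<mu> U - Gfun P U n) \<le> Gstar P \<mu> n"
  unfolding Gstar_def by (rule SUP_upper) simp

lemma Gstar_demand: "Gstar P (demand U) n = ereal (total_surplus (demand U) U - Gfun P U n)"
proof (rule antisym)
  show "Gstar P (demand U) n \<le> ereal (total_surplus (demand U) U - Gfun P U n)"
    unfolding Gstar_def
  proof (rule SUP_least)
    fix U'
    show "ereal (total_surplus (demand U) U' - Gfun P U' n) \<le> ereal (total_surplus (demand U) U - Gfun P U n)"
      using Gfun_subgradient[of U U'] by (simp add: total_surplus_diff)
  qed
qed (rule Gstar_ge)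

lemma demand_eq_if_Gstar_attained:
  assumes "Gstar P \<mu> n = ereal (total_surplus \<mu> U - Gfun P U n)"
  shows "demand U = \<mu>"
proof (rule gradient_unique[where f = "\<lambda>U. Gfun P U n", OF Gfun_directional_derivative])
  fix D :: "'x \<Rightarrow> 'y \<Rightarrow> real" and k
  have "ereal (total_surplus \<mu> (\<lambda>x y. U x y + step k * D x y) - Gfun P (\<lambda>x y. U x y + step k * D x y) n)
      \<le> ereal (total_surplus \<mu> U - Gfun P U n)"
    using Gstar_ge[of \<mu> "\<lambda>x y. U x y + step k * D x y"] unfolding assms .
  then show "step k * total_surplus \<mu> D \<le> Gfun P (\<lambda>x y. U x y + step k * D x y) n - Gfun P U n"
    by (simp add: total_surplus_add total_surplus_scale)
qed

end

section \<open>Duality between welfare and stable matchings\<close>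

text \<open>Transposing the surplus matrices turns the women's side into an instance of
  \<open>market_side\<close>, so every one-sided fact is proved once.\<close>
lemma Hfun_eq_Gfun_flip: "Hfun Q V m = Gfun Q (flip V) m"
  unfolding Hfun_def Gfun_def extU_def extV_def flip_def ..

lemma Hstar_eq_Gstar_flip: "Hstar Q \<mu> m = Gstar Q (flip \<mu>) m"
proof -
  define g where "g W = ereal (total_surplus (flip \<mu>) W - Gfun Q W m)" for W
  have "range flip = UNIV" by (metis surjI flip_flip)
  have "Hstar Q \<mu> m = Sup ((\<lambda>V. g (flip V)) ` UNIV)"
    unfolding Hstar_def g_def Hfun_eq_Gfun_flip total_surplus_flip ..
  also have "\<dots> = Sup (g ` range flip)" by (simp only: image_image)
  also have "\<dots> = Gstar Q (flip \<mu>) m" unfolding \<open>range flip = UNIV\<close> Gstar_def g_def ..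
  finally show ?thesis .
qed

locale matching_market =
  men: market_side P n + women: market_side Q m
  for P :: "'x::finite \<Rightarrow> (real^('y::finite option)) measure" and n :: "'x \<Rightarrow> real"
    and Q :: "'y \<Rightarrow> (real^('x option)) measure" and m :: "'y \<Rightarrow> real"
begin

definition dual_value :: "('x \<Rightarrow> 'y \<Rightarrow> real) \<Rightarrow> ('x \<Rightarrow> 'y \<Rightarrow> real) \<Rightarrow> real" where
  "dual_value \<Phi> U = Gfun P U n + Hfun Q (\<lambda>x y. \<Phi> x y - U x y) m"

lemma Hfun_directional_derivative:
  "(\<lambda>k. (Hfun Q (\<lambda>x y. V x y + step k * D x y) m - Hfun Q V m) / step k)
     \<longlonglongrightarrow> total_surplus (flip (women.demand (flip V))) D"
  using women.Gfun_directional_derivative[of "flip V" "flip D"]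
  unfolding Hfun_eq_Gfun_flip total_surplus_flip_left by (simp add: flip_def)

lemma Hstar_ge: "ereal (total_surplus \<mu> V - Hfun Q V m) \<le> Hstar Q \<mu> m"
  using women.Gstar_ge[of "flip \<mu>" "flip V"]
  unfolding Hstar_eq_Gstar_flip Hfun_eq_Gfun_flip total_surplus_flip .

lemma Hstar_women_demand:
  "Hstar Q (flip (women.demand (flip V))) m
     = ereal (total_surplus (flip (women.demand (flip V))) V - Hfun Q V m)"
  using women.Gstar_demand[of "flip V"]
  unfolding Hstar_eq_Gstar_flip Hfun_eq_Gfun_flip total_surplus_flip_left by simp

lemma women_demand_eq_if_Hstar_attained:
  assumes "Hstar Q \<mu> m = ereal (total_surplus \<mu> V - Hfun Q V m)"
  shows "women.demand (flip V) = flip \<mu>"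
  using assms unfolding Hstar_eq_Gstar_flip Hfun_eq_Gfun_flip total_surplus_flip[of \<mu> V, symmetric]
  by (rule women.demand_eq_if_Gstar_attained)

lemma entropy_Fenchel_Young:
  "entropy P Q \<mu> n m
     \<le> ereal (- ((total_surplus \<mu> U - Gfun P U n) + (total_surplus \<mu> V - Hfun Q V m)))"
proof -
  have "ereal (total_surplus \<mu> U - Gfun P U n) + ereal (total_surplus \<mu> V - Hfun Q V m)
      \<le> Gstar P \<mu> n + Hstar Q \<mu> m"
    by (intro add_mono men.Gstar_ge Hstar_ge)
  then have "- (Gstar P \<mu> n + Hstar Q \<mu> m)
      \<le> - ereal ((total_surplus \<mu> U - Gfun P U n) + (total_surplus \<mu> V - Hfun Q V m))"
    by (simp only: ereal_minus_le_minus plus_ereal.simps)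
  then show ?thesis
    unfolding entropy_def by simp
qed

lemma welfare_le_dual_value: "welfare P Q \<Phi> n m \<le> ereal (dual_value \<Phi> U)"
  unfolding welfare_def
proof (rule SUP_least)
  fix \<mu>
  have "ereal (total_surplus \<mu> \<Phi>) + entropy P Q \<mu> n m
      \<le> ereal (total_surplus \<mu> \<Phi>)
         + ereal (- ((total_surplus \<mu> U - Gfun P U n)
            + (total_surplus \<mu> (\<lambda>x y. \<Phi> x y - U x y) - Hfun Q (\<lambda>x y. \<Phi> x y - U x y) m)))"
    by (intro add_left_mono entropy_Fenchel_Young)
  then show "ereal (total_surplus \<mu> \<Phi>) + entropy P Q \<mu> n m \<le> ereal (dual_value \<Phi> U)"
    unfolding dual_value_def total_surplus_diff by simp
qed

definition taste_scale :: real where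
  "taste_scale = (\<Sum>x\<in>UNIV. n x * (\<integral>e. max_abs e \<partial>P x)) + (\<Sum>y\<in>UNIV. m y * (\<integral>e. max_abs e \<partial>Q y))"

lemma dual_value_lower_bound:
  "n x * max 0 (U x y) + m y * max 0 (\<Phi> x y - U x y) - taste_scale \<le> dual_value \<Phi> U"
  using men.Gfun_lower_bound[of x U y] women.Gfun_lower_bound[of y "flip (\<lambda>x y. \<Phi> x y - U x y)" x]
  unfolding dual_value_def Hfun_eq_Gfun_flip flip_def taste_scale_def by linarith

lemma dual_value_sublevel_bounds:
  assumes "dual_value \<Phi> U \<le> c"
  shows "U x y \<le> (c + taste_scale) / n x" "\<Phi> x y - (c + taste_scale) / m y \<le> U x y"
proof -
  have "n x * U x y \<le> n x * max 0 (U x y)" "m y * (\<Phi> x y - U x y) \<le> m y * max 0 (\<Phi> x y - U x y)"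
    "0 \<le> n x * max 0 (U x y)" "0 \<le> m y * max 0 (\<Phi> x y - U x y)"
    using men.mass_pos[of x] women.mass_pos[of y] by (simp_all add: mult_left_mono)
  with dual_value_lower_bound[of x U y \<Phi>] assms
  have "n x * U x y \<le> c + taste_scale" "m y * (\<Phi> x y - U x y) \<le> c + taste_scale"
    by linarith+
  then have "U x y \<le> (c + taste_scale) / n x" "\<Phi> x y - U x y \<le> (c + taste_scale) / m y"
    using men.mass_pos[of x] women.mass_pos[of y] by (simp_all add: le_divide_eq mult.commute)
  then show "U x y \<le> (c + taste_scale) / n x" "\<Phi> x y - (c + taste_scale) / m y \<le> U x y"
    by linarith+
qed

text \<open>By the lower bound above, the sublevel set of \<open>dual_value \<Phi>\<close> through \<open>0\<close> lies in a box,
  where the continuous function \<open>dual_value \<Phi>\<close> attains its infimum.\<close>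
lemma dual_value_minimizer:
  obtains U0 where "\<And>U. dual_value \<Phi> U0 \<le> dual_value \<Phi> U"
proof -
  define R where "R = dual_value \<Phi> (\<lambda>x y. 0) + taste_scale"
  define of_vec :: "real^('x \<times> 'y) \<Rightarrow> 'x \<Rightarrow> 'y \<Rightarrow> real" where "of_vec w x y = w $ (x, y)" for w x y
  define to_vec :: "('x \<Rightarrow> 'y \<Rightarrow> real) \<Rightarrow> real^('x \<times> 'y)" where "to_vec U = (\<chi> p. U (fst p) (snd p))" for U
  define lo :: "real^('x \<times> 'y)" where "lo = (\<chi> p. \<Phi> (fst p) (snd p) - R / m (snd p))"
  define hi :: "real^('x \<times> 'y)" where "hi = (\<chi> p. R / n (fst p))"
  have of_to_vec: "of_vec (to_vec U) = U" for U unfolding of_vec_def to_vec_def by simp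
  have in_box: "to_vec U \<in> cbox lo hi" if "dual_value \<Phi> U \<le> dual_value \<Phi> (\<lambda>x y. 0)" for U
    using dual_value_sublevel_bounds[OF that] unfolding mem_box_cart lo_def hi_def to_vec_def R_def
    by auto
  then have zero_in_box: "to_vec (\<lambda>x y. 0) \<in> cbox lo hi" by simp
  have "continuous_on (cbox lo hi) (\<lambda>w. dual_value \<Phi> (of_vec w))"
    unfolding dual_value_def Hfun_eq_Gfun_flip of_vec_def flip_def
    by (intro continuous_intros men.Gfun_continuous_on women.Gfun_continuous_on)
  then obtain w0 where min: "\<And>w. w \<in> cbox lo hi \<Longrightarrow> dual_value \<Phi> (of_vec w0) \<le> dual_value \<Phi> (of_vec w)"
    using continuous_attains_inf[OF compact_cbox, of lo hi] zero_in_box by blast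
  have "dual_value \<Phi> (of_vec w0) \<le> dual_value \<Phi> U" for U
  proof (cases "dual_value \<Phi> U \<le> dual_value \<Phi> (\<lambda>x y. 0)")
    case True
    then show ?thesis using min[OF in_box[OF True]] by (simp only: of_to_vec)
  next
    case False
    then show ?thesis using min[OF zero_in_box] by (simp only: of_to_vec)
  qed
  then show ?thesis by (rule that)
qed

lemma demands_agree_at_dual_minimizer:
  assumes min: "\<And>U. dual_value \<Phi> U0 \<le> dual_value \<Phi> U"
  shows "flip (women.demand (flip (\<lambda>x y. \<Phi> x y - U0 x y))) = men.demand U0"
proof -
  define V0 where "V0 = (\<lambda>x y. \<Phi> x y - U0 x y)"
  define W where "W = flip (women.demand (flip V0))"
  have "(\<lambda>x y. men.demand U0 x y - W x y) = (\<lambda>x y. 0)"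
  proof (rule gradient_unique[where f = "dual_value \<Phi>" and U = U0])
    fix D :: "'x \<Rightarrow> 'y \<Rightarrow> real"
    have "(\<lambda>x y. \<Phi> x y - (U0 x y + t * D x y)) = (\<lambda>x y. V0 x y + t * - D x y)" for t
      unfolding V0_def by (simp add: algebra_simps)
    then have split: "dual_value \<Phi> (\<lambda>x y. U0 x y + t * D x y) - dual_value \<Phi> U0
        = (Gfun P (\<lambda>x y. U0 x y + t * D x y) n - Gfun P U0 n)
          + (Hfun Q (\<lambda>x y. V0 x y + t * - D x y) m - Hfun Q V0 m)" for t
      unfolding dual_value_def V0_def by simp
    have "(\<lambda>k. (Gfun P (\<lambda>x y. U0 x y + step k * D x y) n - Gfun P U0 n) / step k
        + (Hfun Q (\<lambda>x y. V0 x y + step k * - D x y) m - Hfun Q V0 m) / step k)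
      \<longlonglongrightarrow> total_surplus (men.demand U0) D + total_surplus W (\<lambda>x y. - D x y)"
      unfolding W_def by (intro tendsto_add men.Gfun_directional_derivative Hfun_directional_derivative)
    then show "(\<lambda>k. (dual_value \<Phi> (\<lambda>x y. U0 x y + step k * D x y) - dual_value \<Phi> U0) / step k)
        \<longlonglongrightarrow> total_surplus (\<lambda>x y. men.demand U0 x y - W x y) D"
      unfolding split by (simp add: add_divide_distrib total_surplus_uminus total_surplus_diff_left)
  next
    fix D :: "'x \<Rightarrow> 'y \<Rightarrow> real" and k
    show "step k * total_surplus (\<lambda>x y. 0) D \<le> dual_value \<Phi> (\<lambda>x y. U0 x y + step k * D x y) - dual_value \<Phi> U0"
      using min by (simp add: total_surplus_def)
  qed
  then show ?thesis unfolding W_def V0_def by (simp add: fun_eq_iff)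
qed

lemma demand_at_dual_minimizer_matching:
  assumes min: "\<And>U. dual_value \<Phi> U0 \<le> dual_value \<Phi> U"
  shows "men.demand U0 \<in> matchings n m"
proof -
  have "(\<Sum>x\<in>UNIV. men.demand U0 x y) \<le> m y" for y
    using women.demand_row_sum_le[of "flip (\<lambda>x y. \<Phi> x y - U0 x y)" y]
    unfolding demands_agree_at_dual_minimizer[OF min, symmetric] by (simp add: flip_def)
  then show ?thesis
    unfolding matchings_def using men.demand_nonneg men.demand_row_sum_le by blast
qed

text \<open>Strong duality: at a minimizer of the dual problem the common demand of both sides is a
  matching at which the Fenchel-Young inequalities for \<open>Gfun\<close> and \<open>Hfun\<close> are equalities.\<close>
lemma welfare_eq_dual_value:
  assumes min: "\<And>U. dual_value \<Phi> U0 \<le> dual_value \<Phi> U"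
  shows "welfare P Q \<Phi> n m = ereal (dual_value \<Phi> U0)"
proof (rule antisym[OF welfare_le_dual_value])
  define \<mu>0 where "\<mu>0 = men.demand U0"
  define V0 where "V0 = (\<lambda>x y. \<Phi> x y - U0 x y)"
  have "entropy P Q \<mu>0 n m
      = - ereal ((total_surplus \<mu>0 U0 - Gfun P U0 n) + (total_surplus \<mu>0 V0 - Hfun Q V0 m))"
    using men.Gstar_demand[of U0] Hstar_women_demand[of V0]
    unfolding entropy_def \<mu>0_def V0_def demands_agree_at_dual_minimizer[OF min] by simp
  also have "\<dots> = ereal (dual_value \<Phi> U0 - total_surplus \<mu>0 \<Phi>)"
  proof -
    have "\<Phi> = (\<lambda>x y. U0 x y + V0 x y)" unfolding V0_def by simp
    then have "total_surplus \<mu>0 \<Phi> = total_surplus \<mu>0 U0 + total_surplus \<mu>0 V0"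
      by (simp only: total_surplus_add)
    then show ?thesis unfolding dual_value_def V0_def by simp
  qed
  finally have "ereal (total_surplus \<mu>0 \<Phi>) + entropy P Q \<mu>0 n m = ereal (dual_value \<Phi> U0)" by simp
  moreover have "ereal (total_surplus \<mu>0 \<Phi>) + entropy P Q \<mu>0 n m \<le> welfare P Q \<Phi> n m"
    unfolding welfare_def \<mu>0_def using demand_at_dual_minimizer_matching[OF min] by (rule SUP_upper)
  ultimately show "ereal (dual_value \<Phi> U0) \<le> welfare P Q \<Phi> n m" by simp
qed

lemma welfare_attained_dual:
  obtains U where "welfare P Q \<Phi> n m = ereal (dual_value \<Phi> U)"
proof (rule dual_value_minimizer[of \<Phi>])
  fix U0 assume "\<And>U. dual_value \<Phi> U0 \<le> dual_value \<Phi> U"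
  then show thesis by (rule that[OF welfare_eq_dual_value])
qed

definition welfare_value :: "('x \<Rightarrow> 'y \<Rightarrow> real) \<Rightarrow> real" where
  "welfare_value \<Phi> = real_of_ereal (welfare P Q \<Phi> n m)"

lemma welfare_eq_ereal: "welfare P Q \<Phi> n m = ereal (welfare_value \<Phi>)"
proof -
  obtain U where "welfare P Q \<Phi> n m = ereal (dual_value \<Phi> U)" by (rule welfare_attained_dual)
  then show ?thesis unfolding welfare_value_def by simp
qed

lemma entropy_le_welfare:
  assumes "\<mu> \<in> matchings n m"
  shows "entropy P Q \<mu> n m \<le> ereal (welfare_value \<Phi> - total_surplus \<mu> \<Phi>)"
proof -
  have "ereal (total_surplus \<mu> \<Phi>) + entropy P Q \<mu> n m \<le> ereal (welfare_value \<Phi>)"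
    unfolding welfare_eq_ereal[symmetric] welfare_def using assms by (rule SUP_upper)
  then show ?thesis by (cases "entropy P Q \<mu> n m") auto
qed

lemma stable_matching_entropy:
  assumes "stable_matching P Q \<Phi> n m \<mu>"
  shows "entropy P Q \<mu> n m = ereal (welfare_value \<Phi> - total_surplus \<mu> \<Phi>)"
proof -
  have "ereal (total_surplus \<mu> \<Phi>) + entropy P Q \<mu> n m = ereal (welfare_value \<Phi>)"
    using assms unfolding stable_matching_def welfare_eq_ereal by simp
  then show ?thesis by (cases "entropy P Q \<mu> n m") auto
qed

lemma stable_matching_iff_entropy:
  "stable_matching P Q \<Phi> n m \<mu> \<longleftrightarrow>
     \<mu> \<in> matchings n m \<and> entropy P Q \<mu> n m = ereal (welfare_value \<Phi> - total_surplus \<mu> \<Phi>)"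
  unfolding stable_matching_def welfare_eq_ereal
  by (cases "entropy P Q \<mu> n m") auto

text \<open>A stable matching is the common gradient of \<open>Gfun\<close> and \<open>Hfun\<close> at every dual optimum,
  because the Fenchel-Young inequalities must then hold with equality.\<close>
lemma stable_matching_eq_demands:
  assumes st: "stable_matching P Q \<Phi> n m \<mu>" and W: "welfare P Q \<Phi> n m = ereal (dual_value \<Phi> U)"
  shows "men.demand U = \<mu>" "women.demand (flip (\<lambda>x y. \<Phi> x y - U x y)) = flip \<mu>"
proof -
  define V where "V = (\<lambda>x y. \<Phi> x y - U x y)"
  define a where "a = total_surplus \<mu> U - Gfun P U n"
  define b where "b = total_surplus \<mu> V - Hfun Q V m"
  have "total_surplus \<mu> \<Phi> = total_surplus \<mu> U + total_surplus \<mu> V"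
    unfolding V_def total_surplus_diff by simp
  moreover have "welfare_value \<Phi> = Gfun P U n + Hfun Q V m"
    using W unfolding welfare_eq_ereal dual_value_def V_def by simp
  ultimately have "welfare_value \<Phi> - total_surplus \<mu> \<Phi> = - (a + b)"
    unfolding a_def b_def by linarith
  then have "- (Gstar P \<mu> n + Hstar Q \<mu> m) = - ereal (a + b)"
    using stable_matching_entropy[OF st] unfolding entropy_def by simp
  then have "Gstar P \<mu> n + Hstar Q \<mu> m = ereal (a + b)"
    by (simp only: ereal_uminus_eq_iff)
  then have Gs: "Gstar P \<mu> n = ereal a" and Hs: "Hstar Q \<mu> m = ereal b"
    using ereal_add_eq_imp_eq[OF men.Gstar_ge[of \<mu> U] Hstar_ge[of \<mu> V]] unfolding a_def b_def by simp_all
  show "men.demand U = \<mu>"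
    using Gs unfolding a_def by (rule men.demand_eq_if_Gstar_attained)
  show "women.demand (flip V) = flip \<mu>"
    using Hs unfolding b_def by (rule women_demand_eq_if_Hstar_attained)
qed

lemma stable_matching_determines_surplus:
  assumes "stable_matching P Q \<Phi> n m \<mu>" "stable_matching P Q \<Phi>' n m \<mu>"
  shows "\<Phi> = \<Phi>'"
proof -
  obtain U where U: "welfare P Q \<Phi> n m = ereal (dual_value \<Phi> U)" by (rule welfare_attained_dual)
  obtain U' where U': "welfare P Q \<Phi>' n m = ereal (dual_value \<Phi>' U')" by (rule welfare_attained_dual)
  have "U = U'"
    by (rule men.demand_inj)
       (simp only: stable_matching_eq_demands(1)[OF assms(1) U] stable_matching_eq_demands(1)[OF assms(2) U'])
  moreover have "flip (\<lambda>x y. \<Phi> x y - U x y) = flip (\<lambda>x y. \<Phi>' x y - U' x y)"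
    by (rule women.demand_inj)
       (simp only: stable_matching_eq_demands(2)[OF assms(1) U] stable_matching_eq_demands(2)[OF assms(2) U'])
  ultimately show ?thesis by (simp add: flip_def fun_eq_iff)
qed

text \<open>Along any direction \<open>E\<close>, the welfare grows at most at the rate given by the stable
  matching: shifting both \<open>\<Phi>\<close> and the dual variable of the men by \<open>t E\<close> bounds the welfare by
  \<open>Gfun\<close> at a shifted point, whose derivative is the men's demand.\<close>
lemma welfare_slope_le_stable_matching:
  assumes st: "stable_matching P Q \<Phi> n m \<mu>"
    and lower: "\<And>t. 0 < t \<Longrightarrow> welfare_value \<Phi> + t * c \<le> welfare_value (\<lambda>x y. \<Phi> x y + t * E x y)"
  shows "c \<le> total_surplus \<mu> E"
proof -
  obtain U where U: "welfare P Q \<Phi> n m = ereal (dual_value \<Phi> U)" by (rule welfare_attained_dual)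
  have upper: "welfare_value (\<lambda>x y. \<Phi> x y + t * E x y) \<le> dual_value \<Phi> U
      + (Gfun P (\<lambda>x y. U x y + t * E x y) n - Gfun P U n)" for t
    using welfare_le_dual_value[of "\<lambda>x y. \<Phi> x y + t * E x y" "\<lambda>x y. U x y + t * E x y"]
    unfolding welfare_eq_ereal dual_value_def by simp
  have "welfare_value \<Phi> = dual_value \<Phi> U" using U unfolding welfare_eq_ereal by simp
  then have "step k * c \<le> Gfun P (\<lambda>x y. U x y + step k * E x y) n - Gfun P U n" for k
    using lower[OF step_pos[of k]] upper[of "step k"] by linarith
  then have "c \<le> (Gfun P (\<lambda>x y. U x y + step k * E x y) n - Gfun P U n) / step k" for k
    using step_pos[of k] by (simp add: le_divide_eq mult.commute)
  then have "c \<le> total_surplus (men.demand U) E"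
    by (intro LIMSEQ_le_const[OF men.Gfun_directional_derivative]) blast
  then show ?thesis using stable_matching_eq_demands(1)[OF st U] by simp
qed

end

section \<open>The semilinear model and the moment-matching estimator\<close>

lemma comoment_eq_total_surplus: "comoment phi k \<mu> = total_surplus \<mu> (phi k)"
  unfolding comoment_def total_surplus_def ..

lemma total_surplus_Phi_lin:
  "total_surplus \<mu> (Phi_lin phi lam) = (\<Sum>k\<in>UNIV. lam k * comoment phi k \<mu>)"
proof -
  have "total_surplus \<mu> (Phi_lin phi lam) = (\<Sum>x\<in>UNIV. \<Sum>y\<in>UNIV. \<Sum>k\<in>UNIV. lam k * (\<mu> x y * phi k x y))"
    unfolding total_surplus_def Phi_lin_def by (simp add: sum_distrib_left mult.left_commute)
  also have "\<dots> = (\<Sum>x\<in>UNIV. \<Sum>k\<in>UNIV. \<Sum>y\<in>UNIV. lam k * (\<mu> x y * phi k x y))"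
    by (rule sum.cong[OF refl], rule sum.swap)
  also have "\<dots> = (\<Sum>k\<in>UNIV. \<Sum>x\<in>UNIV. \<Sum>y\<in>UNIV. lam k * (\<mu> x y * phi k x y))"
    by (rule sum.swap)
  also have "\<dots> = (\<Sum>k\<in>UNIV. lam k * comoment phi k \<mu>)"
    unfolding comoment_def by (simp add: sum_distrib_left)
  finally show ?thesis .
qed

lemma Phi_lin_shift:
  "Phi_lin phi (\<lambda>j. lam j + (if j = k then c else 0)) = (\<lambda>x y. Phi_lin phi lam x y + c * phi k x y)"
  unfolding Phi_lin_def
  by (auto intro!: ext simp: distrib_right sum.distrib if_distrib[of "\<lambda>t. t * _"] cong: if_cong)

lemma entropy_le_entropy_max:
  assumes "\<mu> \<in> matchings n m" "\<And>k. comoment phi k \<mu> = comoment phi k muhat"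
  shows "entropy P Q \<mu> n m \<le> entropy_max P Q phi muhat n m"
  unfolding entropy_max_def using assms by (intro SUP_upper) auto

context matching_market
begin

text \<open>The first-order condition of the moment-matching problem: perturbing the estimator along
  \<open>\<pm>phi k\<close> cannot raise the objective, so the slope of the welfare in these directions is at
  least the observed comoment, and at most the comoment of the stable matching.\<close>
lemma MM_estimator_matches_comoments:
  assumes MM: "MM_estimator P Q phi muhat n m lam"
    and st: "stable_matching P Q (Phi_lin phi lam) n m \<mu>"
  shows "comoment phi k muhat = comoment phi k \<mu>"
proof -
  have "s * comoment phi k muhat \<le> s * comoment phi k \<mu>" for s
  proof -
    have "s * comoment phi k muhat \<le> total_surplus \<mu> (\<lambda>x y. s * phi k x y)"
    proof (rule welfare_slope_le_stable_matching[OF st])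
      fix t :: real
      define l where "l = (\<lambda>j. lam j + (if j = k then t * s else 0))"
      have Phi_l: "Phi_lin phi l = (\<lambda>x y. Phi_lin phi lam x y + t * (s * phi k x y))"
        unfolding l_def Phi_lin_shift by (simp add: mult.assoc)
      have "total_surplus muhat (Phi_lin phi l) - welfare_value (Phi_lin phi l)
          \<le> total_surplus muhat (Phi_lin phi lam) - welfare_value (Phi_lin phi lam)"
        using MM[unfolded MM_estimator_def, rule_format, of l] unfolding welfare_eq_ereal by simp
      then show "welfare_value (Phi_lin phi lam) + t * (s * comoment phi k muhat)
          \<le> welfare_value (\<lambda>x y. Phi_lin phi lam x y + t * (s * phi k x y))"
        unfolding Phi_l total_surplus_add total_surplus_scale comoment_eq_total_surplus by simp
    qed
    then show ?thesis unfolding total_surplus_scale comoment_eq_total_surplus .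
  qed
  from this[of 1] this[of "-1"] show ?thesis by simp
qed

text \<open>Weak duality for the constrained entropy maximization, with equality at a stable matching
  of \<open>Phi_lin phi lam\<close> that meets the comoment constraints: on \<open>matchings n m\<close> the Lagrangian
  is \<open>entropy \<nu> + total_surplus \<nu> \<Phi> - total_surplus \<mu> \<Phi>\<close>, which is bounded by
  \<open>welfare_value \<Phi> - total_surplus \<mu> \<Phi> = entropy \<mu>\<close>.\<close>
lemma entropy_max_at_stable_matching:
  assumes st: "stable_matching P Q (Phi_lin phi lam) n m \<mu>"
    and moments: "\<And>k. comoment phi k \<mu> = comoment phi k muhat"
  shows "entropy_max P Q phi muhat n m = entropy P Q \<mu> n m"
    and "is_lagrange_mult P Q phi muhat n m lam"
proof -
  define \<Phi> where "\<Phi> = Phi_lin phi lam"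
  define L where "L = (SUP \<nu>\<in>matchings n m. entropy P Q \<nu> n m
      + ereal (\<Sum>k\<in>UNIV. lam k * (comoment phi k \<nu> - comoment phi k muhat)))"
  have penalty: "(\<Sum>k\<in>UNIV. lam k * (comoment phi k \<nu> - comoment phi k muhat))
      = total_surplus \<nu> \<Phi> - total_surplus \<mu> \<Phi>" for \<nu>
    unfolding \<Phi>_def total_surplus_Phi_lin moments by (simp add: right_diff_distrib sum_subtractf)
  have L_le: "L \<le> entropy P Q \<mu> n m"
    unfolding L_def
  proof (rule SUP_least)
    fix \<nu> assume "\<nu> \<in> matchings n m"
    then have "entropy P Q \<nu> n m \<le> ereal (welfare_value \<Phi> - total_surplus \<nu> \<Phi>)"
      by (rule entropy_le_welfare)
    then show "entropy P Q \<nu> n m + ereal (\<Sum>k\<in>UNIV. lam k * (comoment phi k \<nu> - comoment phi k muhat))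
        \<le> entropy P Q \<mu> n m"
      unfolding penalty stable_matching_entropy[OF st[folded \<Phi>_def]]
      by (cases "entropy P Q \<nu> n m") auto
  qed
  have max_le_L: "entropy_max P Q phi muhat n m \<le> L"
    unfolding entropy_max_def
  proof (rule SUP_least)
    fix \<nu> assume \<nu>: "\<nu> \<in> {\<nu> \<in> matchings n m. \<forall>k. comoment phi k \<nu> = comoment phi k muhat}"
    have "entropy P Q \<nu> n m + ereal (\<Sum>k\<in>UNIV. lam k * (comoment phi k \<nu> - comoment phi k muhat)) \<le> L"
      unfolding L_def by (rule SUP_upper) (use \<nu> in simp)
    then show "entropy P Q \<nu> n m \<le> L" using \<nu> by simp
  qed
  have le_max: "entropy P Q \<mu> n m \<le> entropy_max P Q phi muhat n m"
    using st moments unfolding stable_matching_def by (intro entropy_le_entropy_max) auto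
  show "entropy_max P Q phi muhat n m = entropy P Q \<mu> n m"
    using max_le_L L_le le_max by (rule antisym[OF order_trans])
  show "is_lagrange_mult P Q phi muhat n m lam"
    unfolding is_lagrange_mult_def L_def[symmetric]
    using max_le_L L_le le_max by (rule antisym[OF _ order_trans])
qed

end

theorem theorem6:
  fixes P :: "'x::finite \<Rightarrow> (real^('y::finite option)) measure"
    and Q :: "'y \<Rightarrow> (real^('x option)) measure"
    and phi :: "'k::finite \<Rightarrow> 'x \<Rightarrow> 'y \<Rightarrow> real"
    and nhat :: "'x \<Rightarrow> real" and mhat :: "'y \<Rightarrow> real"
    and muhat Phi mulam :: "'x \<Rightarrow> 'y \<Rightarrow> real"
    and lamhat :: "'k \<Rightarrow> real"
  assumes P_dist: "\<forall>x. full_support_ac (P x)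
                        \<and> integrable (P x) (\<lambda>e. Max (range (\<lambda>z. \<bar>e $ z\<bar>)))"
    and Q_dist: "\<forall>y. full_support_ac (Q y)
                        \<and> integrable (Q y) (\<lambda>e. Max (range (\<lambda>z. \<bar>e $ z\<bar>)))"
    and phi_indep: "\<forall>c. (\<forall>x y. (\<Sum>k\<in>UNIV. c k * phi k x y) = 0) \<longrightarrow> (\<forall>k. c k = 0)"
    and n_pos: "\<forall>x. 0 < nhat x" and m_pos: "\<forall>y. 0 < mhat y"
    and muhat_M: "muhat \<in> matchings nhat mhat"
    and muhat_pos: "\<forall>x y. 0 < muhat x y"
    and muhat_x0: "\<forall>x. (\<Sum>y\<in>UNIV. muhat x y) < nhat x"
    and muhat_0y: "\<forall>y. (\<Sum>x\<in>UNIV. muhat x y) < mhat y"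
    and Phi_stable: "stable_matching P Q Phi nhat mhat muhat"
    and lamhat_MM: "MM_estimator P Q phi muhat nhat mhat lamhat"
    and mulam_stable: "stable_matching P Q (Phi_lin phi lamhat) nhat mhat mulam"
  shows "(\<forall>k. comoment phi k muhat = comoment phi k mulam)
       \<and> is_lagrange_mult P Q phi muhat nhat mhat lamhat
       \<and> entropy_max P Q phi muhat nhat mhat = entropy P Q mulam nhat mhat
       \<and> entropy P Q muhat nhat mhat \<le> entropy_max P Q phi muhat nhat mhat
       \<and> (entropy P Q muhat nhat mhat = entropy_max P Q phi muhat nhat mhat
            \<longleftrightarrow> (\<exists>l. Phi_lin phi l = Phi))"
proof -
  interpret matching_market P nhat Q mhat
    using P_dist Q_dist n_pos m_pos by unfold_locales (auto simp: regular_taste_def max_abs_def[abs_def])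
  have moments: "\<And>k. comoment phi k muhat = comoment phi k mulam"
    by (rule MM_estimator_matches_comoments[OF lamhat_MM mulam_stable])
  note entropy_max = entropy_max_at_stable_matching[OF mulam_stable moments[symmetric]]
  have "entropy P Q muhat nhat mhat = entropy_max P Q phi muhat nhat mhat
      \<longleftrightarrow> stable_matching P Q (Phi_lin phi lamhat) nhat mhat muhat"
    using muhat_M stable_matching_entropy[OF mulam_stable] moments
    unfolding entropy_max(1) stable_matching_iff_entropy
    by (simp add: total_surplus_Phi_lin)
  moreover have "stable_matching P Q (Phi_lin phi lamhat) nhat mhat muhat \<Longrightarrow> \<exists>l. Phi_lin phi l = Phi"
    using stable_matching_determines_surplus[OF _ Phi_stable] by blast
  moreover have "entropy P Q muhat nhat mhat = entropy_max P Q phi muhat nhat mhat"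
    if "Phi_lin phi l = Phi" for l
    using entropy_max_at_stable_matching(1)[of phi l muhat muhat] Phi_stable that by simp
  ultimately have "entropy P Q muhat nhat mhat = entropy_max P Q phi muhat nhat mhat
      \<longleftrightarrow> (\<exists>l. Phi_lin phi l = Phi)"
    by blast
  moreover have "entropy P Q muhat nhat mhat \<le> entropy_max P Q phi muhat nhat mhat"
    using muhat_M by (rule entropy_le_entropy_max) simp
  ultimately show ?thesis using moments entropy_max by blast
qed

end
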